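(* Assume the setting below. Fix $\boldsymbol\delta\in\mathbb R^n$ and $b\in\mathbb R$. Define $\tilde{\boldsymbol Y}^{\texttt{mp}}_{\boldsymbol Z,\boldsymbol\delta,b}(0)$ and $\tilde{\boldsymbol Y}^{\texttt{mn}}_{\boldsymbol Z,\boldsymbol\delta,b}(0)$ in $\overline{\mathbb R}^n$ by $$\tilde Y^{\texttt{mp}}_{\boldsymbol Z,\boldsymbol\delta,b,i}(0)=\begin{cases}\min\{Y_i-\delta_i,b\},& Z_i=1,M_i=1,\\ b,& Z_i=1,M_i=0,\\ Y_i,& Z_i=0,M_i=1,\\ b,& Z_i=0,M_i=0,\end{cases}\qquad \tilde Y^{\texttt{mn}}_{\boldsymbol Z,\boldsymbol\delta,b,i}(0)=\begin{cases}Y_i-\delta_i,& Z_i=1,M_i=1,\\ -\infty,& Z_i=1,M_i=0,\\ Y_i,& Z_i=0,M_i=1,\\ b,& Z_i=0,M_i=0.\end{cases}$$ (a) If $M_i(1)\ge M_i(0)$ for all $1\le i\le n$, then $\tilde p^{\texttt{mp}}_{\boldsymbol Z,\boldsymbol\delta,b}:=G_{\mathrm R,\phi}\big(t_{\mathrm R,\phi}(\boldsymbol Z,\tilde{\boldsymbol Y}^{\texttt{mp}}_{\boldsymbol Z,\boldsymbol\delta,b}(0))\big)$ is a valid p-value for $H_{\boldsymbol\delta}:\boldsymbol\tau=\boldsymbol\delta$. (b) If $M_i(1)\le M_i(0)$ for all $1\le i\le n$, then $\tilde p^{\texttt{mn}}_{\boldsymbol Z,\boldsymbol\delta,b}:=G_{\mathrm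 R,\phi}\big(t_{\mathrm R,\phi}(\boldsymbol Z,\tilde{\boldsymbol Y}^{\texttt{mn}}_{\boldsymbol Z,\boldsymbol\delta,b}(0))\big)$ is a valid p-value for $H_{\boldsymbol\delta}$. Here valid means: if $H_{\boldsymbol\delta}$ holds, $\mathbb P(p\le\alpha)\le\alpha$ for all $\alpha\in(0,1)$.
   Context: There are $n$ units. Unit $i$ has fixed potential outcomes $Y_i^\star(0),Y_i^\star(1)\in\mathbb R$ and fixed potential missingness indicators $M_i(0),M_i(1)\in\{0,1\}$; $\tau_i=Y_i^\star(1)-Y_i^\star(0)$, $\boldsymbol\tau=(\tau_1,\dots,\tau_n)^\intercal$. The assignment $\boldsymbol Z\in\{0,1\}^n$ is drawn from a completely randomized experiment (CRE): for fixed positive integers $n_1,n_0$, $n_1+n_0=n$, $\boldsymbol Z$ is uniform over vectors in $\{0,1\}^n$ with exactly $n_1$ ones, independently of all potential outcomes and missingness indicators; probabilities are over $\boldsymbol Z$. Observed missingness $M_i=Z_iM_i(1)+(1-Z_i)M_i(0)$; the realized outcome $Z_iY_i^\star(1)+(1-Z_i)Y_i^\star(0)$ is observed, and denoted $Y_i$, only when $M_i=1$. Test statistics: $\overline{\mathbb R}=\mathbb R\cup\{\pm\infty\}$; $\psi_{i,j}(y,y')=\mathbf 1\{y>y'\}+\mathbf 1\{y=y'\}\mathbf 1\{i\ge j\}$ for $y,y'\in\overline{\mathbb R}$; $\mathrm{rank}_i(\boldsymbol y)=\sum_{j=1}^n\psi_{i,j}(y_i,y_j)$. $\phi$ is a fixed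 nondecreasing real function on the nonnegative integers. $t_{\mathrm R,\phi}(\boldsymbol z,\boldsymbol y)$ is either $\sum_i z_i\phi(\mathrm{rank}_i(\boldsymbol y))$ or $\sum_i z_i\phi\big(\sum_j(1-z_j)\psi_{i,j}(y_i,y_j)\big)$; the result holds for either. $G_{\mathrm R,\phi}(c)=\mathbb P(t_{\mathrm R,\phi}(\boldsymbol A,\boldsymbol y_0)\ge c)$ with $\boldsymbol A$ from the CRE and $\boldsymbol y_0\in\mathbb R^n$ any fixed vector (independent of $\boldsymbol y_0$). *)

theory Defs
  imports "HOL-Library.Extended_Real"
begin

text \<open>Units are indexed by 0,...,n-1. An assignment vector z is represented by the
  set Z of treated units (Z_i = 1 iff i in Z).\<close>

definition cre :: "nat \<Rightarrow> nat \<Rightarrow> nat set set" where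
  "cre n n1 = {Z. Z \<subseteq> {0..<n} \<and> card Z = n1}"

definition prob_cre :: "nat \<Rightarrow> nat \<Rightarrow> (nat set \<Rightarrow> bool) \<Rightarrow> real" where
  "prob_cre n n1 P = real (card {Z \<in> cre n n1. P Z}) / real (card (cre n n1))"

definition psi :: "nat \<Rightarrow> nat \<Rightarrow> ereal \<Rightarrow> ereal \<Rightarrow> nat" where
  "psi i j y y' = (if y > y' then 1 else 0) + (if y = y' \<and> i \<ge> j then 1 else 0)"

definition rank :: "nat \<Rightarrow> nat \<Rightarrow> (nat \<Rightarrow> ereal) \<Rightarrow> nat" where
  "rank n i y = (\<Sum>j<n. psi i j (y i) (y j))"

definition t_R :: "bool \<Rightarrow> (nat \<Rightarrow> real) \<Rightarrow> nat \<Rightarrow> nat set \<Rightarrow> (nat \<Rightarrow> ereal) \<Rightarrow> real" where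
  "t_R version phi n Z y =
     (if version then (\<Sum>i\<in>Z. phi (rank n i y))
      else (\<Sum>i\<in>Z. phi (\<Sum>j\<in>{0..<n} - Z. psi i j (y i) (y j))))"

definition G_R :: "bool \<Rightarrow> (nat \<Rightarrow> real) \<Rightarrow> nat \<Rightarrow> nat \<Rightarrow> (nat \<Rightarrow> real) \<Rightarrow> real \<Rightarrow> real" where
  "G_R version phi n n1 y0 c = prob_cre n n1 (\<lambda>A. t_R version phi n A (\<lambda>i. ereal (y0 i)) \<ge> c)"

definition obs_M :: "(nat \<Rightarrow> bool) \<Rightarrow> (nat \<Rightarrow> bool) \<Rightarrow> nat set \<Rightarrow> nat \<Rightarrow> bool" where
  "obs_M M1 M0 Z i = (if i \<in> Z then M1 i else M0 i)"

definition obs_Y :: "(nat \<Rightarrow> real) \<Rightarrow> (nat \<Rightarrow> real) \<Rightarrow> nat set \<Rightarrow> nat \<Rightarrow> real" where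
  "obs_Y Y1 Y0 Z i = (if i \<in> Z then Y1 i else Y0 i)"

definition Y_mp :: "(nat \<Rightarrow> real) \<Rightarrow> (nat \<Rightarrow> real) \<Rightarrow> (nat \<Rightarrow> bool) \<Rightarrow> (nat \<Rightarrow> bool)
    \<Rightarrow> nat set \<Rightarrow> (nat \<Rightarrow> real) \<Rightarrow> real \<Rightarrow> nat \<Rightarrow> ereal" where
  "Y_mp Y1 Y0 M1 M0 Z \<delta> b i =
     (if i \<in> Z then
        (if obs_M M1 M0 Z i then ereal (min (obs_Y Y1 Y0 Z i - \<delta> i) b) else ereal b)
      else
        (if obs_M M1 M0 Z i then ereal (obs_Y Y1 Y0 Z i) else ereal b))"

definition Y_mn :: "(nat \<Rightarrow> real) \<Rightarrow> (nat \<Rightarrow> real) \<Rightarrow> (nat \<Rightarrow> bool) \<Rightarrow> (nat \<Rightarrow> bool)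
    \<Rightarrow> nat set \<Rightarrow> (nat \<Rightarrow> real) \<Rightarrow> real \<Rightarrow> nat \<Rightarrow> ereal" where
  "Y_mn Y1 Y0 M1 M0 Z \<delta> b i =
     (if i \<in> Z then
        (if obs_M M1 M0 Z i then ereal (obs_Y Y1 Y0 Z i - \<delta> i) else -\<infinity>)
      else
        (if obs_M M1 M0 Z i then ereal (obs_Y Y1 Y0 Z i) else ereal b))"

definition valid_pvalue :: "nat \<Rightarrow> nat \<Rightarrow> (nat set \<Rightarrow> real) \<Rightarrow> bool" where
  "valid_pvalue n n1 p \<longleftrightarrow> (\<forall>\<alpha>::real. 0 < \<alpha> \<and> \<alpha> < 1 \<longrightarrow> prob_cre n n1 (\<lambda>Z. p Z \<le> \<alpha>) \<le> \<alpha>)"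

end

theory Submission
  imports Defs "HOL-Library.Product_Lexorder"
begin

text \<open>Under \<open>H\<^sub>\<delta>\<close> the imputed control vector agrees with the fixed vector \<open>y\<^sup>*\<close>,
  \<open>y\<^sup>*\<^sub>i = Y\<^sub>i(0)\<close> if \<open>M\<^sub>i(0) = 1\<close> and \<open>y\<^sup>*\<^sub>i = b\<close> otherwise, on the control units, and by the
  monotonicity of missingness it is no larger than \<open>y\<^sup>*\<close> on the treated units. The rank
  statistic is nondecreasing in the treated outcomes, so the p-value dominates
  \<open>G(t(Z, y\<^sup>*))\<close>. With ties broken by unit index the ranks are a bijection onto
  \<open>{1..n}\<close>, so \<open>t(Z, y)\<close> only depends on the set of ranks of the treated units and the
  randomization distribution of \<open>t(A, y)\<close> is the same for every \<open>y\<close>. Hence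
  \<open>G(t(Z, y\<^sup>*))\<close> is the exact randomization p-value of the fixed statistic \<open>t(\<cdot>, y\<^sup>*)\<close>,
  which is valid.\<close>

definition rank_on :: "'a set \<Rightarrow> ('a \<Rightarrow> 'b::linorder) \<Rightarrow> 'a \<Rightarrow> nat" where
  "rank_on A f x = card {y \<in> A. f y \<le> f x}"

lemma rank_on_strict_mono:
  assumes "finite A" "x \<in> A" "f y < f x"
  shows "rank_on A f y < rank_on A f x"
  unfolding rank_on_def
proof (rule psubset_card_mono)
  show "finite {z \<in> A. f z \<le> f x}" using assms(1) by simp
  have "x \<notin> {z \<in> A. f z \<le> f y}" using assms(3) by (simp add: not_le)
  then show "{z \<in> A. f z \<le> f y} \<subset> {z \<in> A. f z \<le> f x}"
    using assms(2,3) by auto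
qed

lemma rank_on_less_iff:
  assumes "finite A" "inj_on f A" "x \<in> A" "y \<in> A"
  shows "rank_on A f y < rank_on A f x \<longleftrightarrow> f y < f x"
proof
  assume less: "rank_on A f y < rank_on A f x"
  show "f y < f x"
  proof (rule linorder_cases[of "f y" "f x"])
    assume "f y = f x"
    then show ?thesis using less assms(2-4) by (auto dest: inj_onD)
  next
    assume "f x < f y"
    then show ?thesis using less rank_on_strict_mono[OF assms(1,4)] by (meson less_asym)
  qed
qed (rule rank_on_strict_mono[OF assms(1,3)])

lemma bij_betw_rank_on:
  assumes "finite A" "inj_on f A"
  shows "bij_betw (rank_on A f) A {1..card A}"
proof -
  have inj: "inj_on (rank_on A f) A"
  proof (rule inj_onI)
    fix x y assume "x \<in> A" "y \<in> A" "rank_on A f x = rank_on A f y"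
    then have "f x = f y" using rank_on_less_iff[OF assms] by (metis less_irrefl neqE)
    then show "x = y" using \<open>x \<in> A\<close> \<open>y \<in> A\<close> assms(2) by (auto dest: inj_onD)
  qed
  have "rank_on A f x \<in> {1..card A}" if "x \<in> A" for x
    using that assms(1) unfolding rank_on_def
    by (auto simp: Suc_le_eq card_gt_0_iff intro: card_mono)
  then have "rank_on A f ` A = {1..card A}"
    by (intro card_subset_eq) (auto simp: card_image[OF inj])
  with inj show ?thesis by (simp add: bij_betw_def)
qed

lemma rank_on_antimono:
  assumes "finite A" "\<forall>y\<in>A. f y \<le> g y" "f x = g x"
  shows "rank_on A g x \<le> rank_on A f x"
  unfolding rank_on_def using assms by (intro card_mono) (auto intro: order_trans)

lemma card_subsets_image_bij:
  assumes "bij_betw \<sigma> A B"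
  shows "card {Z. Z \<subseteq> A \<and> card Z = k \<and> P (\<sigma> ` Z)} = card {W. W \<subseteq> B \<and> card W = k \<and> P W}"
proof -
  have "card (\<sigma> ` Z) = card Z" if "Z \<subseteq> A" for Z
    using assms that by (meson bij_betw_imp_inj_on card_image inj_on_subset)
  then have "bij_betw (image \<sigma>) {Z \<in> Pow A. card Z = k \<and> P (\<sigma> ` Z)} {W \<in> Pow B. card W = k \<and> P W}"
    by (intro bij_betw_Collect[OF bij_betw_image_Pow[OF assms]]) auto
  then show ?thesis by (simp add: bij_betw_same_card Pow_def)
qed

definition tiebreak_key :: "(nat \<Rightarrow> ereal) \<Rightarrow> nat \<Rightarrow> ereal \<times> nat" where
  "tiebreak_key y i = (y i, i)"

lemma psi_eq_tiebreak_key: "psi i j (y i) (y j) = of_bool (tiebreak_key y j \<le> tiebreak_key y i)"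
  by (auto simp: psi_def tiebreak_key_def)

lemma rank_eq_rank_on: "rank n i y = rank_on {0..<n} (tiebreak_key y) i"
  by (simp add: rank_def rank_on_def psi_eq_tiebreak_key lessThan_atLeast0 Int_def)

lemma inj_on_tiebreak_key: "inj_on (tiebreak_key y) A"
  by (auto simp: inj_on_def tiebreak_key_def)

lemma bij_betw_rank: "bij_betw (\<lambda>i. rank n i y) {0..<n} {1..n}"
  using bij_betw_rank_on[OF _ inj_on_tiebreak_key, of "{0..<n}" y] by (simp add: rank_eq_rank_on)

lemma rank_less_iff:
  "i < n \<Longrightarrow> j < n \<Longrightarrow> rank n j y < rank n i y \<longleftrightarrow> tiebreak_key y j < tiebreak_key y i"
  using rank_on_less_iff[OF _ inj_on_tiebreak_key] by (simp add: rank_eq_rank_on)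

lemma sum_phi_rank: "(\<Sum>i\<in>{0..<n}. phi (rank n i y)) = (\<Sum>k\<in>{1..n}. phi k)"
  using sum.reindex_bij_betw[OF bij_betw_rank] .

definition rank_stat :: "bool \<Rightarrow> (nat \<Rightarrow> real) \<Rightarrow> nat \<Rightarrow> nat set \<Rightarrow> real" where
  "rank_stat version phi n W =
     (if version then (\<Sum>k\<in>W. phi k) else (\<Sum>k\<in>W. phi (card {m \<in> {1..n} - W. m < k})))"

lemma control_count_eq_rank_count:
  assumes "Z \<subseteq> {0..<n}" "i \<in> Z"
  shows "(\<Sum>j\<in>{0..<n} - Z. psi i j (y i) (y j))
           = card {m \<in> {1..n} - (\<lambda>j. rank n j y) ` Z. m < rank n i y}"
proof -
  let ?r = "\<lambda>j. rank n j y" and ?C = "{0..<n} - Z"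
  have inj: "inj_on ?r {0..<n}" and img: "?r ` {0..<n} = {1..n}"
    using bij_betw_rank by (auto simp: bij_betw_def)
  have "psi i j (y i) (y j) = of_bool (?r j < ?r i)" if "j \<in> ?C" for j
  proof -
    have "tiebreak_key y j \<noteq> tiebreak_key y i"
      using that assms by (auto simp: tiebreak_key_def)
    then show ?thesis
      using that assms rank_less_iff[of i n j y] by (auto simp: psi_eq_tiebreak_key)
  qed
  then have "(\<Sum>j\<in>?C. psi i j (y i) (y j)) = (\<Sum>j\<in>?C. of_bool (?r j < ?r i))"
    by (rule sum.cong[OF refl])
  also have "\<dots> = (\<Sum>m\<in>?r ` ?C. of_bool (m < ?r i))"
    using inj by (subst sum.reindex) (auto intro: inj_on_subset)
  also have "?r ` ?C = {1..n} - ?r ` Z"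
    using inj assms(1) img by (subst inj_on_image_set_diff) auto
  finally show ?thesis by (simp add: Int_def)
qed

lemma t_R_eq_rank_stat:
  assumes "Z \<subseteq> {0..<n}"
  shows "t_R version phi n Z y = rank_stat version phi n ((\<lambda>i. rank n i y) ` Z)"
proof -
  have "inj_on (\<lambda>i. rank n i y) Z"
    using bij_betw_rank assms by (auto simp: bij_betw_def intro: inj_on_subset)
  then show ?thesis
    using control_count_eq_rank_count[OF assms]
    by (simp add: t_R_def rank_stat_def sum.reindex cong: sum.cong)
qed

lemma card_cre_t_R:
  "card {Z \<in> cre n n1. P (t_R version phi n Z y)}
     = card {W. W \<subseteq> {1..n} \<and> card W = n1 \<and> P (rank_stat version phi n W)}"
proof -
  have "{Z \<in> cre n n1. P (t_R version phi n Z y)}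
          = {Z. Z \<subseteq> {0..<n} \<and> card Z = n1 \<and> P (rank_stat version phi n ((\<lambda>i. rank n i y) ` Z))}"
    by (auto simp: cre_def t_R_eq_rank_stat)
  then show ?thesis
    using card_subsets_image_bij[OF bij_betw_rank] by simp
qed

lemma G_R_eq_prob_cre: "G_R version phi n n1 y0 c = prob_cre n n1 (\<lambda>A. c \<le> t_R version phi n A y)"
  unfolding G_R_def prob_cre_def card_cre_t_R ..

lemma psi_mono: "a \<le> a' \<Longrightarrow> psi i j a c \<le> psi i j a' c"
  by (auto simp: psi_def)

lemma t_R_mono:
  assumes "Z \<subseteq> {0..<n}" "mono phi"
    and treated: "\<forall>i\<in>Z. y i \<le> y' i" and control: "\<forall>i\<in>{0..<n} - Z. y i = y' i"
  shows "t_R version phi n Z y \<le> t_R version phi n Z y'"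
proof (cases version)
  case True
  have "y i \<le> y' i" if "i \<in> {0..<n}" for i
    using treated control that by (cases "i \<in> Z") auto
  then have "rank n j y' \<le> rank n j y" if "j \<in> {0..<n} - Z" for j
    unfolding rank_eq_rank_on using that control
    by (intro rank_on_antimono) (auto simp: tiebreak_key_def)
  then have "(\<Sum>j\<in>{0..<n} - Z. phi (rank n j y')) \<le> (\<Sum>j\<in>{0..<n} - Z. phi (rank n j y))"
    using \<open>mono phi\<close> by (intro sum_mono) (simp add: monoD)
  moreover have "(\<Sum>j\<in>{0..<n} - Z. phi (rank n j x))
                   = (\<Sum>k\<in>{1..n}. phi k) - (\<Sum>i\<in>Z. phi (rank n i x))" for x
    using assms(1) by (simp add: sum_diff sum_phi_rank)
  ultimately show ?thesis
    using True by (simp add: t_R_def rank_def)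
next
  case False
  have "(\<Sum>j\<in>{0..<n} - Z. psi i j (y i) (y j)) \<le> (\<Sum>j\<in>{0..<n} - Z. psi i j (y' i) (y' j))"
    if "i \<in> Z" for i
    using that treated control by (intro sum_mono) (simp add: psi_mono)
  then show ?thesis
    using False \<open>mono phi\<close> by (simp add: t_R_def monoD sum_mono)
qed

lemma finite_cre: "finite (cre n n1)"
  by (rule finite_subset[of _ "Pow {0..<n}"]) (auto simp: cre_def)

lemma prob_cre_mono:
  assumes "\<And>Z. Z \<in> cre n n1 \<Longrightarrow> P Z \<Longrightarrow> Q Z"
  shows "prob_cre n n1 P \<le> prob_cre n n1 Q"
proof -
  have "card {Z \<in> cre n n1. P Z} \<le> card {Z \<in> cre n n1. Q Z}"
    using assms finite_cre by (intro card_mono) auto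
  then show ?thesis
    unfolding prob_cre_def by (intro divide_right_mono) auto
qed

lemma valid_pvalue_mono:
  assumes "valid_pvalue n n1 q" "\<And>Z. Z \<in> cre n n1 \<Longrightarrow> q Z \<le> p Z"
  shows "valid_pvalue n n1 p"
  unfolding valid_pvalue_def
proof (intro allI impI)
  fix \<alpha> :: real assume "0 < \<alpha> \<and> \<alpha> < 1"
  then have "prob_cre n n1 (\<lambda>Z. q Z \<le> \<alpha>) \<le> \<alpha>"
    using assms(1) by (simp add: valid_pvalue_def)
  moreover have "prob_cre n n1 (\<lambda>Z. p Z \<le> \<alpha>) \<le> prob_cre n n1 (\<lambda>Z. q Z \<le> \<alpha>)"
    using assms(2) by (intro prob_cre_mono) (meson order_trans)
  ultimately show "prob_cre n n1 (\<lambda>Z. p Z \<le> \<alpha>) \<le> \<alpha>" by simp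
qed

text \<open>If some assignment has upper tail probability at most \<open>\<alpha>\<close>, take the one with the
  smallest statistic \<open>T Z\<^sub>0\<close>: every such assignment has \<open>T Z \<ge> T Z\<^sub>0\<close>, so there are at
  most as many of them as assignments in the tail of \<open>T Z\<^sub>0\<close>.\<close>
lemma valid_pvalue_tail_prob:
  fixes T :: "nat set \<Rightarrow> 'a::linorder"
  shows "valid_pvalue n n1 (\<lambda>Z. prob_cre n n1 (\<lambda>A. T Z \<le> T A))"
  unfolding valid_pvalue_def
proof (intro allI impI)
  fix \<alpha> :: real assume "0 < \<alpha> \<and> \<alpha> < 1"
  let ?tail = "\<lambda>c. prob_cre n n1 (\<lambda>A. c \<le> T A)"
  let ?S = "{Z \<in> cre n n1. ?tail (T Z) \<le> \<alpha>}"
  show "prob_cre n n1 (\<lambda>Z. ?tail (T Z) \<le> \<alpha>) \<le> \<alpha>"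
  proof (cases "?S = {}")
    case True
    have "prob_cre n n1 (\<lambda>Z. ?tail (T Z) \<le> \<alpha>) = 0"
      unfolding prob_cre_def[of n n1 "\<lambda>Z. ?tail (T Z) \<le> \<alpha>"] True by simp
    then show ?thesis using \<open>0 < \<alpha> \<and> \<alpha> < 1\<close> by simp
  next
    case False
    have "finite ?S" using finite_cre by simp
    define Z\<^sub>0 where "Z\<^sub>0 = arg_min_on T ?S"
    have Z\<^sub>0: "Z\<^sub>0 \<in> ?S" "\<And>Z. Z \<in> ?S \<Longrightarrow> T Z\<^sub>0 \<le> T Z"
      unfolding Z\<^sub>0_def using \<open>finite ?S\<close> False by (rule arg_min_if_finite(1), rule arg_min_least)
    then have "prob_cre n n1 (\<lambda>Z. ?tail (T Z) \<le> \<alpha>) \<le> ?tail (T Z\<^sub>0)"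
      by (intro prob_cre_mono) auto
    also have "\<dots> \<le> \<alpha>" using Z\<^sub>0(1) by simp
    finally show ?thesis .
  qed
qed

lemma valid_pvalue_dominated_imputation:
  assumes "mono phi"
    and "\<And>Z i. Z \<in> cre n n1 \<Longrightarrow> i \<in> Z \<Longrightarrow> Yt Z i \<le> y i"
    and "\<And>Z i. Z \<in> cre n n1 \<Longrightarrow> i \<in> {0..<n} - Z \<Longrightarrow> Yt Z i = y i"
  shows "valid_pvalue n n1 (\<lambda>Z. G_R version phi n n1 y0 (t_R version phi n Z (Yt Z)))"
proof (rule valid_pvalue_mono[OF valid_pvalue_tail_prob])
  fix Z assume "Z \<in> cre n n1"
  then have "t_R version phi n Z (Yt Z) \<le> t_R version phi n Z y"
    using assms by (intro t_R_mono) (auto simp: cre_def)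
  then show "prob_cre n n1 (\<lambda>A. t_R version phi n Z y \<le> t_R version phi n A y)
               \<le> G_R version phi n n1 y0 (t_R version phi n Z (Yt Z))"
    unfolding G_R_eq_prob_cre[where y = y] by (intro prob_cre_mono) auto
qed

lemma Y_mp_le_control_outcome:
  assumes "i \<in> Z" "M0 i \<longrightarrow> M1 i" "Y1 i - \<delta> i = Y0 i"
  shows "Y_mp Y1 Y0 M1 M0 Z \<delta> b i \<le> ereal (if M0 i then Y0 i else b)"
  using assms by (auto simp: Y_mp_def obs_M_def obs_Y_def)

lemma Y_mn_le_control_outcome:
  assumes "i \<in> Z" "M1 i \<longrightarrow> M0 i" "Y1 i - \<delta> i = Y0 i"
  shows "Y_mn Y1 Y0 M1 M0 Z \<delta> b i \<le> ereal (if M0 i then Y0 i else b)"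
  using assms by (auto simp: Y_mn_def obs_M_def obs_Y_def)

lemma Y_mp_control: "i \<notin> Z \<Longrightarrow> Y_mp Y1 Y0 M1 M0 Z \<delta> b i = ereal (if M0 i then Y0 i else b)"
  by (simp add: Y_mp_def obs_M_def obs_Y_def)

lemma Y_mn_control: "i \<notin> Z \<Longrightarrow> Y_mn Y1 Y0 M1 M0 Z \<delta> b i = ereal (if M0 i then Y0 i else b)"
  by (simp add: Y_mn_def obs_M_def obs_Y_def)

theorem theorem3:
  fixes n n1 n0 :: nat
    and Y1 Y0 :: "nat \<Rightarrow> real" and M1 M0 :: "nat \<Rightarrow> bool"
    and phi :: "nat \<Rightarrow> real" and version :: bool
    and y0 \<delta> :: "nat \<Rightarrow> real" and b :: real
  assumes "0 < n1" and "0 < n0" and "n1 + n0 = n"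
    and "mono phi"
    and H: "\<forall>i<n. Y1 i - Y0 i = \<delta> i"
  shows "((\<forall>i<n. M0 i \<longrightarrow> M1 i) \<longrightarrow>
            valid_pvalue n n1 (\<lambda>Z. G_R version phi n n1 y0
               (t_R version phi n Z (Y_mp Y1 Y0 M1 M0 Z \<delta> b))))
       \<and> ((\<forall>i<n. M1 i \<longrightarrow> M0 i) \<longrightarrow>
            valid_pvalue n n1 (\<lambda>Z. G_R version phi n n1 y0
               (t_R version phi n Z (Y_mn Y1 Y0 M1 M0 Z \<delta> b))))"
proof -
  let ?y = "\<lambda>i. ereal (if M0 i then Y0 i else b)"
  have treated: "i < n \<and> Y1 i - \<delta> i = Y0 i" if "Z \<in> cre n n1" "i \<in> Z" for Z i
    using that H by (force simp: cre_def)
  show ?thesis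
  proof (intro conjI impI)
    assume "\<forall>i<n. M0 i \<longrightarrow> M1 i"
    then show "valid_pvalue n n1 (\<lambda>Z. G_R version phi n n1 y0
                 (t_R version phi n Z (Y_mp Y1 Y0 M1 M0 Z \<delta> b)))"
      using treated by (intro valid_pvalue_dominated_imputation[where y = ?y] \<open>mono phi\<close>)
        (auto simp: Y_mp_le_control_outcome Y_mp_control)
  next
    assume "\<forall>i<n. M1 i \<longrightarrow> M0 i"
    then show "valid_pvalue n n1 (\<lambda>Z. G_R version phi n n1 y0
                 (t_R version phi n Z (Y_mn Y1 Y0 M1 M0 Z \<delta> b)))"
      using treated by (intro valid_pvalue_dominated_imputation[where y = ?y] \<open>mono phi\<close>)
        (auto simp: Y_mn_le_control_outcome Y_mn_control)
  qed
qed

end
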